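(* Let $X_1,\dots,X_n$ be (possibly dependent) random variables taking values in $\{0,1\}$, with $p_i=E(X_i)$, and let $S_n=\sum_{i=1}^n X_i$ and $\lambda=E(S_n)=\sum_{i=1}^n p_i$. Then $$D(P_{S_n}\,\|\,\mathrm{Po}(\lambda))\le \sum_{i=1}^n p_i^2+\Big[\sum_{i=1}^n H(X_i)-H(X_1,\dots,X_n)\Big].$$
   Context: $P_{S_n}$ is the distribution of $S_n$; $\mathrm{Po}(\lambda)$ is the Poisson distribution with mean $\lambda$. For distributions $P,Q$ on a countable set $S$, $D(P\|Q)=\sum_{x\in S}P(x)\log\frac{P(x)}{Q(x)}$ (natural logarithm, with conventions $0\log(0/a)=0$, $0\log(0/0)=0$, $a\log(a/0)=\infty$ for $a>0$). $H(X)=-\sum_x P(x)\log P(x)$ is the Shannon entropy of a discrete random variable or random vector, and $H(X_1,\dots,X_n)$ is the joint entropy. *)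

theory Defs
  imports "HOL-Probability.Probability"
begin

definition kl_div :: "'b pmf \<Rightarrow> 'b pmf \<Rightarrow> ereal" where
  "kl_div P Q =
     (if \<exists>x\<in>set_pmf P. pmf Q x = 0 then \<infinity>
      else ereal (\<Sum>\<^sub>\<infinity>x\<in>set_pmf P. pmf P x * ln (pmf P x / pmf Q x)))"

definition shannon_entropy :: "'b pmf \<Rightarrow> real" where
  "shannon_entropy P = - (\<Sum>\<^sub>\<infinity>x\<in>set_pmf P. pmf P x * ln (pmf P x))"

text \<open>Poisson distribution with mean lam >= 0; Po(0) is the point mass at 0.
  (The library's poisson_pmf requires a strictly positive rate.)\<close>
definition Po :: "real \<Rightarrow> nat pmf" where
  "Po lam = (if 0 < lam then poisson_pmf lam else return_pmf 0)"

end

theory Submission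
  imports Defs
begin

text \<open>Let \<open>J\<close> be the joint law of \<open>(X\<^sub>1, \<dots>, X\<^sub>n)\<close> on 0/1 lists and \<open>r\<^sub>j = E X\<^sub>j\<close>.
  Weight each 0/1 list \<open>x\<close> by \<open>Q(x) = \<Prod>\<^sub>j exp(-r\<^sub>j) r\<^sub>j ^ x\<^sub>j\<close>, the product of the
  Poisson(\<open>r\<^sub>j\<close>) probabilities of its entries. The image of \<open>Q\<close> under \<open>x \<mapsto> \<Sum>\<^sub>j x\<^sub>j\<close> is
  dominated by \<open>Po(\<lambda>)\<close>, since the elementary symmetric sum \<open>e\<^sub>k(r)\<close> is at most \<open>\<lambda>\<^sup>k / k!\<close>.
  Applying \<open>ln t \<le> t - 1\<close> on each fibre then gives
  \<open>D(P\<^sub>S \<parallel> Po(\<lambda>)) \<le> \<Sum>\<^sub>x J(x) ln (J(x) / Q(x)) = \<Sum>\<^sub>j (r\<^sub>j - r\<^sub>j ln r\<^sub>j) - H(X\<^sub>1, \<dots>, X\<^sub>n)\<close>,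
  and \<open>r\<^sub>j - r\<^sub>j ln r\<^sub>j = H(X\<^sub>j) + D(Ber(r\<^sub>j) \<parallel> Po(r\<^sub>j)) \<le> H(X\<^sub>j) + r\<^sub>j\<^sup>2\<close>.\<close>

definition bit_lists :: "nat \<Rightarrow> nat list set" where
  "bit_lists n = {xs. length xs = n \<and> set xs \<subseteq> {0, 1}}"

lemma finite_bit_lists: "finite (bit_lists n)"
  using finite_lists_length_eq[of "{0::nat, 1}" n] unfolding bit_lists_def by (simp add: conj_commute)

lemma map_in_bit_lists: "(\<And>i. i \<in> set ns \<Longrightarrow> f i \<in> {0, 1}) \<Longrightarrow> map f ns \<in> bit_lists (length ns)"
  unfolding bit_lists_def mem_Collect_eq set_map image_subset_iff length_map by blast

lemma nth_bit_lists: "xs \<in> bit_lists n \<Longrightarrow> j < n \<Longrightarrow> xs ! j \<in> {0, 1}"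
  unfolding bit_lists_def using nth_mem by blast

lemma bit_lists_0 [simp]: "bit_lists 0 = {[]}"
  unfolding bit_lists_def by auto

lemma bit_lists_Suc: "bit_lists (Suc n) = Cons 0 ` bit_lists n \<union> Cons 1 ` bit_lists n"
  unfolding bit_lists_def by (auto simp: length_Suc_conv image_iff)

lemma power_Suc_add_ge:
  fixes a b :: real
  assumes "0 \<le> a" "0 \<le> b"
  shows "a ^ Suc m + real (Suc m) * b * a ^ m \<le> (a + b) ^ Suc m"
proof (induction m)
  case 0
  then show ?case by simp
next
  case (Suc m)
  have "a ^ Suc (Suc m) + real (Suc (Suc m)) * b * a ^ Suc m
      \<le> (a + b) * (a ^ Suc m + real (Suc m) * b * a ^ m)"
    using assms by (simp add: algebra_simps)
  also have "\<dots> \<le> (a + b) * (a + b) ^ Suc m"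
    using Suc assms by (intro mult_left_mono) auto
  finally show ?case by simp
qed

text \<open>The elementary symmetric polynomial \<open>e\<^sub>k(r 0, \<dots>, r (n - 1))\<close>, with a \<open>k\<close>-subset of
  \<open>{..<n}\<close> encoded by its 0/1 indicator list.\<close>
definition elem_sym :: "(nat \<Rightarrow> real) \<Rightarrow> nat \<Rightarrow> nat \<Rightarrow> real" where
  "elem_sym r n k = (\<Sum>xs | xs \<in> bit_lists n \<and> sum_list xs = k. \<Prod>j<n. r j ^ (xs ! j))"

lemma elem_sym_0 [simp]: "elem_sym r 0 k = (if k = 0 then 1 else 0)"
proof -
  have "{xs. xs \<in> bit_lists 0 \<and> sum_list xs = k} = (if k = 0 then {[]} else {})"
    by (cases k) auto
  then show ?thesis
    by (simp add: elem_sym_def)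
qed

lemma elem_sym_Suc:
  "elem_sym r (Suc n) k = elem_sym (\<lambda>j. r (Suc j)) n k
     + (if k = 0 then 0 else r 0 * elem_sym (\<lambda>j. r (Suc j)) n (k - 1))"
proof -
  define r' where "r' j = r (Suc j)" for j
  have filter: "elem_sym r m k = (\<Sum>xs\<in>bit_lists m. if sum_list xs = k then \<Prod>j<m. r j ^ (xs ! j) else 0)"
    for r m k
    unfolding elem_sym_def by (rule sum.inter_filter[OF finite_bit_lists])
  have prod_Cons: "(\<Prod>j<Suc n. r j ^ ((b # ys) ! j)) = r 0 ^ b * (\<Prod>j<n. r' j ^ (ys ! j))" for b ys
    unfolding r'_def by (subst prod.lessThan_Suc_shift) simp
  have sum_Cons: "(\<Sum>xs\<in>Cons b ` bit_lists n. if sum_list xs = k then \<Prod>j<Suc n. r j ^ (xs ! j) else 0)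
      = r 0 ^ b * (\<Sum>ys\<in>bit_lists n. if b + sum_list ys = k then \<Prod>j<n. r' j ^ (ys ! j) else 0)" for b
    by (simp only: sum.reindex[of "Cons b", simplified] comp_def prod_Cons sum_list.Cons)
      (auto simp: sum_distrib_left intro!: sum.cong)
  have "elem_sym r (Suc n) k
      = (\<Sum>xs\<in>Cons 0 ` bit_lists n. if sum_list xs = k then \<Prod>j<Suc n. r j ^ (xs ! j) else 0)
        + (\<Sum>xs\<in>Cons 1 ` bit_lists n. if sum_list xs = k then \<Prod>j<Suc n. r j ^ (xs ! j) else 0)"
    unfolding filter unfolding bit_lists_Suc
    by (rule sum.union_disjoint) (auto simp: finite_bit_lists)
  also have "\<dots> = elem_sym r' n k
      + r 0 * (\<Sum>ys\<in>bit_lists n. if 1 + sum_list ys = k then \<Prod>j<n. r' j ^ (ys ! j) else 0)"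
    unfolding sum_Cons filter by simp
  also have "(\<Sum>ys\<in>bit_lists n. if 1 + sum_list ys = k then \<Prod>j<n. r' j ^ (ys ! j) else 0)
      = (if k = 0 then 0 else elem_sym r' n (k - 1))"
    unfolding filter by (cases k) auto
  finally show ?thesis
    unfolding r'_def by simp
qed

lemma elem_sym_le:
  assumes "\<And>j. 0 \<le> r j"
  shows "elem_sym r n k \<le> (\<Sum>j<n. r j) ^ k / fact k"
  using assms
proof (induction n arbitrary: r k)
  case 0
  then show ?case by simp
next
  case (Suc n)
  define R where "R = (\<Sum>j<n. r (Suc j))"
  have IH: "elem_sym (\<lambda>j. r (Suc j)) n k \<le> R ^ k / fact k" for k
    using Suc by (simp add: R_def)
  show ?case
  proof (cases k)
    case 0
    then show ?thesis
      using IH[of 0] by (simp add: elem_sym_Suc)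
  next
    case (Suc m)
    have "elem_sym r (Suc n) k = elem_sym (\<lambda>j. r (Suc j)) n (Suc m) + r 0 * elem_sym (\<lambda>j. r (Suc j)) n m"
      using Suc by (simp add: elem_sym_Suc)
    also have "\<dots> \<le> R ^ Suc m / fact (Suc m) + r 0 * (R ^ m / fact m)"
      using IH[of "Suc m"] mult_left_mono[OF IH[of m], of "r 0"] \<open>\<And>j. 0 \<le> r j\<close>
      by (intro add_mono) auto
    also have "\<dots> = (R ^ Suc m + real (Suc m) * r 0 * R ^ m) / fact (Suc m)"
      unfolding add_divide_distrib fact_Suc by (simp del: of_nat_Suc)
    also have "\<dots> \<le> (R + r 0) ^ Suc m / fact (Suc m)"
      using power_Suc_add_ge \<open>\<And>j. 0 \<le> r j\<close>
      by (intro divide_right_mono) (auto simp: R_def sum_nonneg)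
    also have "R + r 0 = (\<Sum>j<Suc n. r j)"
      unfolding R_def by (subst sum.lessThan_Suc_shift) simp
    finally show ?thesis
      using Suc by simp
  qed
qed

lemma expectation_eq_sum_set_pmf:
  fixes f :: "'a \<Rightarrow> real"
  assumes "finite (set_pmf M)"
  shows "measure_pmf.expectation M f = (\<Sum>x\<in>set_pmf M. pmf M x * f x)"
  using integral_measure_pmf[OF assms, of M f] by simp

lemma expectation_pos_finite_pmf:
  fixes f :: "'a \<Rightarrow> real"
  assumes "finite (set_pmf M)" "\<And>x. 0 \<le> f x" "x \<in> set_pmf M" "0 < f x"
  shows "0 < measure_pmf.expectation M f"
proof -
  have "0 < pmf M x * f x"
    using assms by (simp add: pmf_positive)
  also have "\<dots> \<le> (\<Sum>y\<in>set_pmf M. pmf M y * f y)"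
    using assms by (intro member_le_sum) auto
  finally show ?thesis
    by (simp add: expectation_eq_sum_set_pmf[OF assms(1)])
qed

lemma nth_eq_0_or_expectation_nth_pos:
  fixes J :: "nat list pmf"
  assumes "finite (set_pmf J)" "xs \<in> set_pmf J"
  shows "xs ! j = 0 \<or> 0 < measure_pmf.expectation J (\<lambda>xs. real (xs ! j))"
  using expectation_pos_finite_pmf[OF assms(1), of "\<lambda>xs. real (xs ! j)" xs] assms(2) by auto

lemma pmf_map_pmf_eq_sum:
  assumes "finite (set_pmf M)"
  shows "pmf (map_pmf f M) y = (\<Sum>x | x \<in> set_pmf M \<and> f x = y. pmf M x)"
proof -
  have "pmf (map_pmf f M) y = measure M (f -` {y} \<inter> set_pmf M)"
    by (simp add: pmf_map measure_Int_set_pmf)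
  also have "f -` {y} \<inter> set_pmf M = {x. x \<in> set_pmf M \<and> f x = y}"
    by auto
  finally show ?thesis
    using assms by (simp add: measure_measure_pmf_finite)
qed

lemma shannon_entropy_eq_sum:
  assumes "finite A" "set_pmf P \<subseteq> A"
  shows "shannon_entropy P = - (\<Sum>x\<in>A. pmf P x * ln (pmf P x))"
proof -
  have "finite (set_pmf P)"
    using assms finite_subset by blast
  then have "shannon_entropy P = - (\<Sum>x\<in>set_pmf P. pmf P x * ln (pmf P x))"
    unfolding shannon_entropy_def by simp
  also have "(\<Sum>x\<in>set_pmf P. pmf P x * ln (pmf P x)) = (\<Sum>x\<in>A. pmf P x * ln (pmf P x))"
    using assms by (intro sum.mono_neutral_left) (auto simp: set_pmf_eq)
  finally show ?thesis .
qed

lemma kl_div_eq_sum: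
  assumes "finite (set_pmf P)" "\<And>x. x \<in> set_pmf P \<Longrightarrow> 0 < pmf Q x"
  shows "kl_div P Q = ereal (\<Sum>x\<in>set_pmf P. pmf P x * ln (pmf P x / pmf Q x))"
  unfolding kl_div_def using assms by force

lemma pmf_Po:
  assumes "0 \<le> lam"
  shows "pmf (Po lam) k = exp (- lam) * lam ^ k / fact k"
proof (cases "lam = 0")
  case True
  then show ?thesis by (cases k) (auto simp: Po_def)
next
  case False
  then show ?thesis using assms by (simp add: Po_def)
qed

lemma mult_ln_le_mult_ln_div_add:
  fixes a b c :: real
  assumes "0 < a" "0 < b" "0 < c"
  shows "a * ln c \<le> a * ln (a / b) - a + b * c"
proof -
  have "a * ln (b * c / a) \<le> a * (b * c / a - 1)"
    using assms by (intro mult_left_mono ln_le_minus_one) auto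
  moreover have "ln c = ln (a / b) + ln (b * c / a)"
    using assms by (simp add: ln_div ln_mult)
  ultimately show ?thesis
    using assms by (simp add: algebra_simps)
qed

lemma kl_div_map_pmf_le:
  fixes J :: "'a pmf" and R :: "'b pmf" and f :: "'a \<Rightarrow> 'b" and q :: "'a \<Rightarrow> real"
  assumes fin: "finite (set_pmf J)"
    and q_pos: "\<And>x. x \<in> set_pmf J \<Longrightarrow> 0 < q x"
    and dominated: "\<And>y. (\<Sum>x | x \<in> set_pmf J \<and> f x = y. q x) \<le> pmf R y"
  shows "kl_div (map_pmf f J) R \<le> ereal (\<Sum>x\<in>set_pmf J. pmf J x * ln (pmf J x / q x))"
proof -
  define A where "A = set_pmf J"
  define P where "P = map_pmf f J"
  define \<rho> where "\<rho> y = pmf P y / pmf R y" for y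
  have regroup: "(\<Sum>x\<in>A. g (f x) * h x) = (\<Sum>y\<in>f ` A. g y * (\<Sum>x | x \<in> A \<and> f x = y. h x))"
    for g h :: "_ \<Rightarrow> real"
    unfolding sum.image_gen[OF fin[folded A_def], of "\<lambda>x. g (f x) * h x" f]
    by (auto simp: sum_distrib_left intro!: sum.cong)
  have P_pos: "0 < pmf P (f x)" if "x \<in> A" for x
    using that by (simp add: P_def A_def pmf_positive)
  have R_pos: "0 < pmf R (f x)" if "x \<in> A" for x
  proof -
    have "q x \<le> (\<Sum>x' | x' \<in> A \<and> f x' = f x. q x')"
      using that fin q_pos by (intro member_le_sum) (auto simp: A_def intro: less_imp_le)
    then show ?thesis
      using q_pos[of x] that dominated[of "f x"] by (simp add: A_def)
  qed
  have "(\<Sum>y\<in>f ` A. pmf P y * ln (\<rho> y)) = (\<Sum>x\<in>A. ln (\<rho> (f x)) * pmf J x)"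
    using regroup[of "\<lambda>y. ln (\<rho> y)" "pmf J"]
    by (simp add: P_def A_def mult.commute pmf_map_pmf_eq_sum[OF fin, of f])
  also have "\<dots> \<le> (\<Sum>x\<in>A. pmf J x * ln (pmf J x / q x) - pmf J x + \<rho> (f x) * q x)"
  proof (intro sum_mono)
    fix x assume "x \<in> A"
    then show "ln (\<rho> (f x)) * pmf J x \<le> pmf J x * ln (pmf J x / q x) - pmf J x + \<rho> (f x) * q x"
      using mult_ln_le_mult_ln_div_add[of "pmf J x" "q x" "\<rho> (f x)"] P_pos R_pos q_pos
      by (simp add: \<rho>_def A_def pmf_positive mult.commute)
  qed
  also have "\<dots> = (\<Sum>x\<in>A. pmf J x * ln (pmf J x / q x)) - 1
      + (\<Sum>y\<in>f ` A. \<rho> y * (\<Sum>x | x \<in> A \<and> f x = y. q x))"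
    using regroup[of \<rho> q] sum_pmf_eq_1[OF fin order.refl]
    by (simp add: sum.distrib sum_subtractf A_def)
  finally have bound: "(\<Sum>y\<in>f ` A. pmf P y * ln (\<rho> y))
      \<le> (\<Sum>x\<in>A. pmf J x * ln (pmf J x / q x)) - 1
         + (\<Sum>y\<in>f ` A. \<rho> y * (\<Sum>x | x \<in> A \<and> f x = y. q x))" .
  have "(\<Sum>y\<in>f ` A. \<rho> y * (\<Sum>x | x \<in> A \<and> f x = y. q x)) \<le> (\<Sum>y\<in>f ` A. \<rho> y * pmf R y)"
    using dominated by (intro sum_mono mult_left_mono) (auto simp: \<rho>_def A_def)
  also have "\<dots> = (\<Sum>y\<in>set_pmf P. pmf P y)"
    using R_pos by (intro sum.cong) (force simp: \<rho>_def P_def A_def)+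
  also have "\<dots> = 1"
    using fin by (simp add: sum_pmf_eq_1 P_def)
  finally have "(\<Sum>y\<in>f ` A. \<rho> y * (\<Sum>x | x \<in> A \<and> f x = y. q x)) \<le> 1" .
  moreover have "kl_div P R = ereal (\<Sum>y\<in>f ` A. pmf P y * ln (\<rho> y))"
    unfolding \<rho>_def using fin R_pos by (subst kl_div_eq_sum) (auto simp: P_def A_def)
  ultimately show ?thesis
    using bound by (simp add: P_def A_def)
qed

text \<open>The product of the Poisson(\<open>r j\<close>) probabilities of the entries of a 0/1 list
  (no factorials appear, as \<open>0! = 1! = 1\<close>).\<close>
definition poisson_weight :: "(nat \<Rightarrow> real) \<Rightarrow> nat \<Rightarrow> nat list \<Rightarrow> real" where
  "poisson_weight r n xs = exp (- (\<Sum>j<n. r j)) * (\<Prod>j<n. r j ^ (xs ! j))"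

lemma poisson_weight_nonneg:
  assumes "\<And>j. 0 \<le> r j"
  shows "0 \<le> poisson_weight r n xs"
  using assms by (simp add: poisson_weight_def prod_nonneg)

lemma sum_poisson_weight_le_Po:
  assumes "\<And>j. 0 \<le> r j" "A \<subseteq> bit_lists n"
  shows "(\<Sum>xs | xs \<in> A \<and> sum_list xs = k. poisson_weight r n xs) \<le> pmf (Po (\<Sum>j<n. r j)) k"
proof -
  have "(\<Sum>xs | xs \<in> A \<and> sum_list xs = k. poisson_weight r n xs)
      \<le> (\<Sum>xs | xs \<in> bit_lists n \<and> sum_list xs = k. poisson_weight r n xs)"
  proof (rule sum_mono2)
    show "finite {xs. xs \<in> bit_lists n \<and> sum_list xs = k}"
      using finite_bit_lists by simp
    show "{xs. xs \<in> A \<and> sum_list xs = k} \<subseteq> {xs. xs \<in> bit_lists n \<and> sum_list xs = k}"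
      using assms(2) by (intro Collect_mono) (simp add: subset_iff)
  qed (rule poisson_weight_nonneg[OF assms(1)])
  also have "\<dots> = exp (- (\<Sum>j<n. r j)) * elem_sym r n k"
    by (simp add: poisson_weight_def elem_sym_def sum_distrib_left)
  also have "\<dots> \<le> exp (- (\<Sum>j<n. r j)) * ((\<Sum>j<n. r j) ^ k / fact k)"
    using elem_sym_le[OF assms(1)] by (intro mult_left_mono) auto
  also have "\<dots> = pmf (Po (\<Sum>j<n. r j)) k"
    using assms by (simp add: pmf_Po sum_nonneg)
  finally show ?thesis .
qed

lemma poisson_weight_pos:
  assumes "\<And>j. j < n \<Longrightarrow> xs ! j = 0 \<or> 0 < r j"
  shows "0 < poisson_weight r n xs"
proof -
  have "0 < (\<Prod>j<n. r j ^ (xs ! j))"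
    using assms by (intro prod_pos) fastforce
  then show ?thesis
    by (simp add: poisson_weight_def)
qed

lemma ln_poisson_weight:
  assumes "\<And>j. j < n \<Longrightarrow> xs ! j = 0 \<or> 0 < r j"
  shows "ln (poisson_weight r n xs) = (\<Sum>j<n. real (xs ! j) * ln (r j)) - (\<Sum>j<n. r j)"
proof -
  have pos: "0 < r j ^ (xs ! j)" if "j \<in> {..<n}" for j
    using assms[of j] that by auto
  then have "0 < (\<Prod>j<n. r j ^ (xs ! j))"
    by (rule prod_pos)
  then have "ln (poisson_weight r n xs) = ln (\<Prod>j<n. r j ^ (xs ! j)) - (\<Sum>j<n. r j)"
    by (simp add: poisson_weight_def ln_mult_pos)
  also have "ln (\<Prod>j<n. r j ^ (xs ! j)) = (\<Sum>j<n. ln (r j ^ (xs ! j)))"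
    using pos by (intro ln_prod) (simp, metis less_irrefl)
  finally show ?thesis
    by (simp add: ln_realpow)
qed

lemma sum_pmf_ln_div_poisson_weight:
  fixes J :: "nat list pmf"
  assumes fin: "finite (set_pmf J)"
  defines "r \<equiv> \<lambda>j. measure_pmf.expectation J (\<lambda>xs. real (xs ! j))"
  shows "(\<Sum>xs\<in>set_pmf J. pmf J xs * ln (pmf J xs / poisson_weight r n xs))
           = (\<Sum>j<n. r j - r j * ln (r j)) - shannon_entropy J"
proof -
  have r_eq: "r j = (\<Sum>xs\<in>set_pmf J. pmf J xs * real (xs ! j))" for j
    unfolding r_def by (rule expectation_eq_sum_set_pmf[OF fin])
  have support: "xs ! j = 0 \<or> 0 < r j" if "xs \<in> set_pmf J" for xs j
    unfolding r_def using fin that by (rule nth_eq_0_or_expectation_nth_pos)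
  have "(\<Sum>xs\<in>set_pmf J. pmf J xs * ln (pmf J xs / poisson_weight r n xs))
      = (\<Sum>xs\<in>set_pmf J. pmf J xs * ln (pmf J xs) + (\<Sum>j<n. r j) * pmf J xs
                  - (\<Sum>j<n. ln (r j) * (pmf J xs * real (xs ! j))))"
  proof (intro sum.cong refl)
    fix xs assume "xs \<in> set_pmf J"
    then have ln_eq: "ln (pmf J xs / poisson_weight r n xs)
        = ln (pmf J xs) + (\<Sum>j<n. r j) - (\<Sum>j<n. real (xs ! j) * ln (r j))"
      using support
      by (simp add: pmf_positive ln_divide_pos poisson_weight_pos ln_poisson_weight)
    show "pmf J xs * ln (pmf J xs / poisson_weight r n xs)
        = pmf J xs * ln (pmf J xs) + (\<Sum>j<n. r j) * pmf J xs
          - (\<Sum>j<n. ln (r j) * (pmf J xs * real (xs ! j)))"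
      unfolding ln_eq by (simp add: algebra_simps sum_distrib_left)
  qed
  also have "\<dots> = (\<Sum>xs\<in>set_pmf J. pmf J xs * ln (pmf J xs)) + (\<Sum>j<n. r j) * (\<Sum>xs\<in>set_pmf J. pmf J xs)
      - (\<Sum>j<n. ln (r j) * (\<Sum>xs\<in>set_pmf J. pmf J xs * real (xs ! j)))"
    by (simp add: sum.distrib sum_subtractf sum_distrib_left sum.swap[of _ "{..<n}"])
  also have "\<dots> = (\<Sum>j<n. r j - r j * ln (r j)) - shannon_entropy J"
    using sum_pmf_eq_1[OF fin order.refl] shannon_entropy_eq_sum[OF fin order.refl]
    by (simp add: r_eq[symmetric] sum_subtractf mult.commute)
  finally show ?thesis .
qed

text \<open>The left-hand side is \<open>D(Ber(p) \<parallel> Po(p))\<close>.\<close>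
lemma bernoulli_poisson_divergence_le:
  fixes p :: real
  assumes "0 \<le> p" "p \<le> 1"
  shows "p + (1 - p) * ln (1 - p) \<le> p\<^sup>2"
proof (cases "p = 1")
  case False
  then have "(1 - p) * ln (1 - p) \<le> (1 - p) * ((1 - p) - 1)"
    using assms by (intro mult_left_mono ln_le_minus_one) auto
  then show ?thesis
    by (simp add: power2_eq_square algebra_simps)
qed simp

lemma shannon_entropy_bit_ge:
  assumes "set_pmf B \<subseteq> {0, 1}"
  defines "p \<equiv> measure_pmf.expectation B real"
  shows "p - p * ln p \<le> p\<^sup>2 + shannon_entropy B"
proof -
  have p: "p = pmf B 1"
    using integral_measure_pmf[of "{0, 1}" B real] assms by auto
  have "pmf B 0 + pmf B 1 = 1"
    using sum_pmf_eq_1[of "{0, 1}" B] assms by simp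
  then have "pmf B 0 = 1 - p"
    using p by simp
  then have "shannon_entropy B = - (p * ln p + (1 - p) * ln (1 - p))"
    using shannon_entropy_eq_sum[of "{0, 1}" B] assms p by simp
  then show ?thesis
    using bernoulli_poisson_divergence_le[of p] p pmf_le_1[of B 1] by simp
qed

lemma expectation_sum_list:
  fixes J :: "nat list pmf"
  assumes fin: "finite (set_pmf J)" and len: "\<And>xs. xs \<in> set_pmf J \<Longrightarrow> length xs = n"
  shows "measure_pmf.expectation J (\<lambda>xs. real (sum_list xs))
           = (\<Sum>j<n. measure_pmf.expectation J (\<lambda>xs. real (xs ! j)))"
proof -
  have "measure_pmf.expectation J (\<lambda>xs. real (sum_list xs))
      = (\<Sum>xs\<in>set_pmf J. \<Sum>j<n. pmf J xs * real (xs ! j))"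
    using len by (auto simp: expectation_eq_sum_set_pmf[OF fin] sum_list_sum_nth
        atLeast0LessThan sum_distrib_left intro!: sum.cong)
  also have "\<dots> = (\<Sum>j<n. measure_pmf.expectation J (\<lambda>xs. real (xs ! j)))"
    by (subst sum.swap) (simp add: expectation_eq_sum_set_pmf[OF fin])
  finally show ?thesis .
qed

lemma kl_div_sum_list_Po_le:
  fixes J :: "nat list pmf"
  assumes J: "set_pmf J \<subseteq> bit_lists n"
  defines "r \<equiv> \<lambda>j. measure_pmf.expectation J (\<lambda>xs. real (xs ! j))"
  shows "kl_div (map_pmf sum_list J) (Po (measure_pmf.expectation J (\<lambda>xs. real (sum_list xs))))
           \<le> ereal ((\<Sum>j<n. (r j)\<^sup>2)
               + ((\<Sum>j<n. shannon_entropy (map_pmf (\<lambda>xs. xs ! j) J)) - shannon_entropy J))"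
proof -
  have fin: "finite (set_pmf J)"
    using J finite_bit_lists finite_subset by blast
  have r_nonneg: "0 \<le> r j" for j
    unfolding r_def by simp
  have mean: "measure_pmf.expectation J (\<lambda>xs. real (sum_list xs)) = (\<Sum>j<n. r j)"
    unfolding r_def using J by (intro expectation_sum_list[OF fin]) (auto simp: bit_lists_def)
  have weight_pos: "0 < poisson_weight r n xs" if "xs \<in> set_pmf J" for xs
    unfolding r_def using fin that by (intro poisson_weight_pos nth_eq_0_or_expectation_nth_pos)
  have dominated: "(\<Sum>xs | xs \<in> set_pmf J \<and> sum_list xs = k. poisson_weight r n xs)
      \<le> pmf (Po (\<Sum>j<n. r j)) k" for k
    by (rule sum_poisson_weight_le_Po[OF r_nonneg J])
  have marginal: "r j - r j * ln (r j) \<le> (r j)\<^sup>2 + shannon_entropy (map_pmf (\<lambda>xs. xs ! j) J)"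
    if "j < n" for j
  proof -
    have "set_pmf (map_pmf (\<lambda>xs. xs ! j) J) \<subseteq> {0, 1}"
      unfolding set_map_pmf image_subset_iff using J that nth_bit_lists by blast
    from shannon_entropy_bit_ge[OF this] show ?thesis
      by (simp add: r_def)
  qed
  have "kl_div (map_pmf sum_list J) (Po (\<Sum>j<n. r j))
      \<le> ereal (\<Sum>xs\<in>set_pmf J. pmf J xs * ln (pmf J xs / poisson_weight r n xs))"
    by (rule kl_div_map_pmf_le[OF fin weight_pos dominated])
  also have "(\<Sum>xs\<in>set_pmf J. pmf J xs * ln (pmf J xs / poisson_weight r n xs))
      = (\<Sum>j<n. r j - r j * ln (r j)) - shannon_entropy J"
    unfolding r_def by (rule sum_pmf_ln_div_poisson_weight[OF fin])
  also have "\<dots> \<le> (\<Sum>j<n. (r j)\<^sup>2)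
      + ((\<Sum>j<n. shannon_entropy (map_pmf (\<lambda>xs. xs ! j) J)) - shannon_entropy J)"
    using sum_mono[of "{..<n}" "\<lambda>j. r j - r j * ln (r j)"
        "\<lambda>j. (r j)\<^sup>2 + shannon_entropy (map_pmf (\<lambda>xs. xs ! j) J)"] marginal
    by (simp add: sum.distrib)
  finally show ?thesis
    by (simp add: mean)
qed

theorem proposition1:
  fixes M :: "'a pmf" and X :: "nat \<Rightarrow> 'a \<Rightarrow> nat" and n :: nat
  assumes bin: "\<And>i \<omega>. i \<in> {1..n} \<Longrightarrow> X i \<omega> \<in> {0, 1}"
  defines "p \<equiv> (\<lambda>i. measure_pmf.expectation M (\<lambda>\<omega>. real (X i \<omega>)))"
      and "S \<equiv> (\<lambda>\<omega>. \<Sum>i\<in>{1..n}. X i \<omega>)"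
      and "lam \<equiv> measure_pmf.expectation M (\<lambda>\<omega>. real (\<Sum>i\<in>{1..n}. X i \<omega>))"
  shows "kl_div (map_pmf S M) (Po lam)
           \<le> ereal ((\<Sum>i\<in>{1..n}. (p i)\<^sup>2)
               + ((\<Sum>i\<in>{1..n}. shannon_entropy (map_pmf (X i) M))
                  - shannon_entropy (map_pmf (\<lambda>\<omega>. map (\<lambda>i. X i \<omega>) [1..<n+1]) M)))"
proof -
  define J where "J = map_pmf (\<lambda>\<omega>. map (\<lambda>i. X i \<omega>) [1..<n+1]) M"
  have "map (\<lambda>i. X i \<omega>) [1..<n+1] \<in> bit_lists (length [1..<n+1])" for \<omega>
    by (rule map_in_bit_lists, rule bin) (simp del: upt_Suc)
  then have J_bits: "set_pmf J \<subseteq> bit_lists n"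
    unfolding J_def set_map_pmf by (auto simp del: upt_Suc)
  have nth_J: "map (\<lambda>i. X i \<omega>) [1..<n+1] ! j = X (Suc j) \<omega>" if "j < n" for \<omega> j
    using that by (simp add: nth_map_upt del: upt_Suc)
  have sum_J: "S \<omega> = sum_list (map (\<lambda>i. X i \<omega>) [1..<n+1])" for \<omega>
    by (simp add: S_def sum_set_upt_conv_sum_list_nat[symmetric] atLeastLessThanSuc_atLeastAtMost del: upt_Suc)
  have reindex: "(\<Sum>i\<in>{1..n}. g i) = (\<Sum>j<n. g (Suc j))" for g :: "nat \<Rightarrow> real"
    by (rule sum_bounds_lt_plus1[symmetric])
  have "map_pmf S M = map_pmf sum_list J"
    unfolding J_def map_pmf_comp by (intro map_pmf_cong) (simp_all add: sum_J)
  moreover have "lam = measure_pmf.expectation J (\<lambda>xs. real (sum_list xs))"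
    using sum_J by (simp add: lam_def J_def S_def)
  moreover have "(\<Sum>i\<in>{1..n}. (p i)\<^sup>2) = (\<Sum>j<n. (measure_pmf.expectation J (\<lambda>xs. real (xs ! j)))\<^sup>2)"
    unfolding reindex by (simp add: p_def J_def nth_J del: upt_Suc)
  moreover have "(\<Sum>i\<in>{1..n}. shannon_entropy (map_pmf (X i) M))
      = (\<Sum>j<n. shannon_entropy (map_pmf (\<lambda>xs. xs ! j) J))"
    unfolding reindex J_def map_pmf_comp
    by (intro sum.cong refl arg_cong[where f = shannon_entropy] map_pmf_cong) (simp_all add: nth_J del: upt_Suc)
  ultimately show ?thesis
    using kl_div_sum_list_Po_le[OF J_bits] by (simp only: J_def)
qed

end
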